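(* Let $I=(\mathcal{M},[N],(d_i)_{i\in[N]})$ be a non-positive instance, $\lambda\ge0$ and $\varepsilon>0$, and suppose the $\lambda$-max-min problem for $I$ has a solution. Set $u_i:=-d_i$. Let $\alpha>1$, $\beta>1$ with $\alpha\beta<1+\varepsilon$. For each $i$ let $c_i$ be any real number with $mMS_{u_i}^N(\mathcal{M})\le c_i\le\alpha\cdot mMS_{u_i}^N(\mathcal{M})$, and define the additive function $u_i'$ by $u_i'(j):=u_i(j)/c_i$ if $c_i>0$ and $u_i'\equiv0$ if $c_i=0$. Let $\lambda^*:=\min_{(S_1,\dots,S_N)\in\Pi_N(\mathcal{M})}\max_{i}u_i'(S_i)$, and let $S^\varepsilon=(S^\varepsilon_1,\dots,S^\varepsilon_N)\in\Pi_N(\mathcal{M})$ be any allocation with $u_i'(S^\varepsilon_i)\le\beta\lambda^*$ for all $i\in[N]$. Then $S^\varepsilon$ is a solution of the $((1+\varepsilon)\lambda)$-max-min problem for $I$, i.e. $d_i(S^\varepsilon_i)\ge(1+\varepsilon)\lambda\cdot MmS_{d_i}^N(\mathcal{M})$ for all $i\in[N]$.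
   Context: A non-positive instance: finite item set $\mathcal{M}$, agents $[N]=\{1,\dots,N\}$, additive utilities $d_i$ with $d_i(j)\le0$. $\Pi_N(\mathcal{M})$ is the set of ordered $N$-partitions of $\mathcal{M}$ (parts may be empty). $MmS_{v}^N(\mathcal{M}):=\max_{(S_1,\ldots,S_N)\in\Pi_N(\mathcal{M})}\min_{j} v(S_j)$, $mMS_{v}^N(\mathcal{M}):=\min_{(S_1,\ldots,S_N)\in\Pi_N(\mathcal{M})}\max_{j} v(S_j)$. An allocation $S$ solves the $\mu$-max-min problem for $I$ iff $d_i(S_i)\ge\mu\cdot MmS_{d_i}^N(\mathcal{M})$ for all $i$. *)

theory Defs
  imports Complex_Main
begin

text \<open>Ordered N-partitions of M, agents indexed by {1..N}; an allocation is a function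
  S :: nat => 'a set that is empty outside {1..N}.\<close>
definition partitions :: "nat \<Rightarrow> 'a set \<Rightarrow> (nat \<Rightarrow> 'a set) set" where
  "partitions N M = {S. (\<forall>i\<in>{1..N}. S i \<subseteq> M) \<and> (\<Union>i\<in>{1..N}. S i) = M
      \<and> (\<forall>i\<in>{1..N}. \<forall>k\<in>{1..N}. i \<noteq> k \<longrightarrow> S i \<inter> S k = {})
      \<and> (\<forall>i. i \<notin> {1..N} \<longrightarrow> S i = {})}"

definition val :: "('a \<Rightarrow> real) \<Rightarrow> 'a set \<Rightarrow> real" where
  "val v A = (\<Sum>j\<in>A. v j)"

definition MmS :: "('a \<Rightarrow> real) \<Rightarrow> nat \<Rightarrow> 'a set \<Rightarrow> real" where
  "MmS v N M = Max ((\<lambda>S. Min ((\<lambda>j. val v (S j)) ` {1..N})) ` partitions N M)"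

definition mMS :: "('a \<Rightarrow> real) \<Rightarrow> nat \<Rightarrow> 'a set \<Rightarrow> real" where
  "mMS v N M = Min ((\<lambda>S. Max ((\<lambda>j. val v (S j)) ` {1..N})) ` partitions N M)"

definition solves_maxmin :: "real \<Rightarrow> nat \<Rightarrow> 'a set \<Rightarrow> (nat \<Rightarrow> 'a \<Rightarrow> real) \<Rightarrow> (nat \<Rightarrow> 'a set) \<Rightarrow> bool" where
  "solves_maxmin \<mu> N M d S \<longleftrightarrow> S \<in> partitions N M \<and>
     (\<forall>i\<in>{1..N}. val (d i) (S i) \<ge> \<mu> * MmS (d i) N M)"

end

theory Submission
  imports Defs "HOL-Library.FuncSet"
begin

text \<open>Writing \<open>u\<^sub>i = -d\<^sub>i\<close> and \<open>m\<^sub>i = mMS\<^sub>u\<^sub>i\<close>, duality gives \<open>MmS\<^sub>d\<^sub>i = -m\<^sub>i\<close>, so the goal is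
  \<open>u\<^sub>i(S\<^sup>\<epsilon>\<^sub>i) \<le> (1+\<epsilon>)\<lambda>m\<^sub>i\<close>. A solution of the \<open>\<lambda>\<close>-problem has \<open>u\<^sub>i(S\<^sub>i) \<le> \<lambda>m\<^sub>i \<le> \<lambda>c\<^sub>i\<close>, hence
  normalised cost at most \<open>\<lambda>\<close>, so \<open>\<lambda>\<^sup>* \<le> \<lambda>\<close>. Then \<open>u\<^sub>i(S\<^sup>\<epsilon>\<^sub>i) \<le> \<beta>\<lambda>c\<^sub>i \<le> \<alpha>\<beta>\<lambda>m\<^sub>i\<close> when
  \<open>c\<^sub>i > 0\<close>; when \<open>c\<^sub>i = 0\<close> also \<open>m\<^sub>i = 0\<close>, which forces every item to cost \<open>i\<close> nothing.\<close>

lemma finite_partitions: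
  assumes "finite M"
  shows "finite (partitions N M)"
proof -
  let ?extend = "\<lambda>f i. if i \<in> {1..N} then f i else {}"
  have "partitions N M \<subseteq> ?extend ` (Pi\<^sub>E {1..N} (\<lambda>_. Pow M))"
  proof
    fix S assume S: "S \<in> partitions N M"
    then have "S = ?extend (restrict S {1..N})"
      unfolding partitions_def by (auto simp: fun_eq_iff)
    moreover have "restrict S {1..N} \<in> Pi\<^sub>E {1..N} (\<lambda>_. Pow M)"
      using S unfolding partitions_def by auto
    ultimately show "S \<in> ?extend ` (Pi\<^sub>E {1..N} (\<lambda>_. Pow M))" by blast
  qed
  moreover have "finite (Pi\<^sub>E {1..N} (\<lambda>_. Pow M))"
    using assms by (simp add: finite_PiE)
  ultimately show ?thesis by (meson finite_imageI finite_subset)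
qed

lemma partitions_nonempty:
  assumes "1 \<le> N"
  shows "partitions N M \<noteq> {}"
proof -
  have "(\<lambda>i. if i = 1 then M else {}) \<in> partitions N M"
    using assms unfolding partitions_def by auto
  then show ?thesis by blast
qed

lemma partitions_subset:
  "S \<in> partitions N M \<Longrightarrow> i \<in> {1..N} \<Longrightarrow> S i \<subseteq> M"
  unfolding partitions_def by blast

lemma partitions_cover:
  "S \<in> partitions N M \<Longrightarrow> j \<in> M \<Longrightarrow> \<exists>i\<in>{1..N}. j \<in> S i"
  unfolding partitions_def by blast

lemma val_uminus: "val (\<lambda>j. - v j) A = - val v A"
  unfolding val_def by (simp add: sum_negf)

lemma val_normalized:
  "val (\<lambda>j. if 0 < c then v j / c else 0) A = (if 0 < c then val v A / c else 0)"
  unfolding val_def by (simp add: sum_divide_distrib)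

lemma MmS_eq_uminus_mMS:
  assumes "finite M" and "1 \<le> N"
  shows "MmS v N M = - mMS (\<lambda>j. - v j) N M"
proof -
  have bundles: "Min ((\<lambda>j. val v (S j)) ` {1..N}) = - Max ((\<lambda>j. val (\<lambda>x. - v x) (S j)) ` {1..N})"
    for S :: "nat \<Rightarrow> _"
    using assms(2) by (simp add: val_uminus image_image)
  show ?thesis
    unfolding MmS_def mMS_def bundles
    using finite_partitions[OF assms(1)] partitions_nonempty[OF assms(2)]
    by (subst minus_Min_eq_Max) (auto simp: image_image)
qed

lemma mMS_attained:
  assumes "finite M" and "1 \<le> N"
  obtains T where "T \<in> partitions N M" and "mMS v N M = Max ((\<lambda>k. val v (T k)) ` {1..N})"
proof -
  have "mMS v N M \<in> (\<lambda>S. Max ((\<lambda>k. val v (S k)) ` {1..N})) ` partitions N M"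
    unfolding mMS_def
    using finite_partitions[OF assms(1)] partitions_nonempty[OF assms(2)] by (intro Min_in) auto
  then show ?thesis using that by blast
qed

lemma val_nonneg: "\<forall>j\<in>A. 0 \<le> v j \<Longrightarrow> 0 \<le> val v A"
  unfolding val_def by (rule sum_nonneg) blast

lemma mMS_nonneg:
  assumes "finite M" and "1 \<le> N" and "\<forall>j\<in>M. 0 \<le> v j"
  shows "0 \<le> mMS v N M"
proof -
  obtain T where T: "T \<in> partitions N M" and m: "mMS v N M = Max ((\<lambda>k. val v (T k)) ` {1..N})"
    using mMS_attained[OF assms(1,2)] .
  have "0 \<le> val v (T 1)"
    using assms(2,3) partitions_subset[OF T] by (intro val_nonneg) auto
  also have "\<dots> \<le> mMS v N M"
    unfolding m using assms(2) by (intro Max_ge) auto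
  finally show ?thesis .
qed

lemma item_le_mMS:
  assumes "finite M" and "1 \<le> N" and nonneg: "\<forall>j\<in>M. 0 \<le> v j" and "j \<in> M"
  shows "v j \<le> mMS v N M"
proof -
  obtain T where T: "T \<in> partitions N M" and m: "mMS v N M = Max ((\<lambda>k. val v (T k)) ` {1..N})"
    using mMS_attained[OF assms(1,2)] .
  obtain k where k: "k \<in> {1..N}" and j: "j \<in> T k"
    using partitions_cover[OF T \<open>j \<in> M\<close>] by blast
  have sub: "T k \<subseteq> M" using partitions_subset[OF T k] .
  have "v j \<le> val v (T k)"
    unfolding val_def using j sub nonneg finite_subset[OF sub \<open>finite M\<close>]
    by (intro member_le_sum) auto
  also have "\<dots> \<le> mMS v N M"
    unfolding m using k by (intro Max_ge) auto
  finally show ?thesis .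
qed

lemma minmax_le_of_partition:
  assumes "finite M" and "1 \<le> N" and "S \<in> partitions N M" and "\<forall>k\<in>{1..N}. f k (S k) \<le> b"
  shows "Min ((\<lambda>S. Max ((\<lambda>k. f k (S k)) ` {1..N})) ` partitions N M) \<le> b"
proof -
  have "Min ((\<lambda>S. Max ((\<lambda>k. f k (S k)) ` {1..N})) ` partitions N M) \<le> Max ((\<lambda>k. f k (S k)) ` {1..N})"
    using finite_partitions[OF assms(1)] assms(3) by (intro Min_le) auto
  also have "\<dots> \<le> b"
    using assms(2,4) by (auto simp: Max_le_iff)
  finally show ?thesis .
qed

lemma normalized_minmax_le:
  assumes "finite M" and "1 \<le> N" and S: "S \<in> partitions N M" and lam: "0 \<le> lam"
    and cost: "\<forall>k\<in>{1..N}. 0 < c k \<longrightarrow> val (u k) (S k) \<le> lam * c k"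
  shows "Min ((\<lambda>S. Max ((\<lambda>k. val (\<lambda>j. if 0 < c k then u k j / c k else 0) (S k)) ` {1..N}))
           ` partitions N M) \<le> lam"
proof (rule minmax_le_of_partition[OF assms(1,2) S], intro ballI)
  fix k assume "k \<in> {1..N}"
  then show "val (\<lambda>j. if 0 < c k then u k j / c k else 0) (S k) \<le> lam"
    using cost lam by (auto simp: val_normalized pos_divide_le_eq mult.commute)
qed

lemma val_le_of_normalized_val_le:
  assumes "finite M" and "1 \<le> N" and nonneg: "\<forall>j\<in>M. 0 \<le> u j" and A: "A \<subseteq> M"
    and c_lower: "mMS u N M \<le> c" and c_upper: "c \<le> \<alpha> * mMS u N M"
    and lam: "0 \<le> lam" and beta: "0 < \<beta>" and ab: "\<alpha> * \<beta> \<le> 1 + eps"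
    and bound: "val (\<lambda>j. if 0 < c then u j / c else 0) A \<le> \<beta> * lam"
  shows "val u A \<le> (1 + eps) * lam * mMS u N M"
proof -
  define m where "m = mMS u N M"
  have m_nonneg: "0 \<le> m"
    unfolding m_def using mMS_nonneg[OF assms(1-3)] .
  show ?thesis
  proof (cases "0 < c")
    case True
    have "val u A / c \<le> \<beta> * lam"
      using bound True unfolding val_normalized by simp
    then have "val u A \<le> \<beta> * lam * c"
      using True by (simp add: pos_divide_le_eq)
    also have "\<dots> \<le> \<beta> * lam * (\<alpha> * m)"
      using c_upper beta lam unfolding m_def by (intro mult_left_mono) auto
    also have "\<dots> = (\<alpha> * \<beta>) * (lam * m)"
      by (simp add: algebra_simps)
    also have "\<dots> \<le> (1 + eps) * (lam * m)"
      using ab lam m_nonneg by (intro mult_right_mono) auto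
    finally show ?thesis unfolding m_def by (simp add: algebra_simps)
  next
    case False
    with c_lower m_nonneg have "m = 0" unfolding m_def by linarith
    then have "\<forall>j\<in>A. u j = 0"
      using item_le_mMS[OF assms(1-3)] nonneg A unfolding m_def by force
    then show ?thesis
      using \<open>m = 0\<close> unfolding m_def val_def by simp
  qed
qed

theorem theorem2:
  fixes M :: "'a set" and N :: nat and d :: "nat \<Rightarrow> 'a \<Rightarrow> real"
    and lam eps \<alpha> \<beta> :: real and c :: "nat \<Rightarrow> real" and Seps :: "nat \<Rightarrow> 'a set"
  assumes finM: "finite M" and N1: "N \<ge> 1"
    and nonpos: "\<forall>i\<in>{1..N}. \<forall>j\<in>M. d i j \<le> 0"
    and lam: "lam \<ge> 0" and eps: "eps > 0"
    and sol: "\<exists>S. solves_maxmin lam N M d S"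
    and alpha: "\<alpha> > 1" and beta: "\<beta> > 1" and ab: "\<alpha> * \<beta> < 1 + eps"
    and c_bounds: "\<forall>i\<in>{1..N}. mMS (\<lambda>j. - d i j) N M \<le> c i \<and> c i \<le> \<alpha> * mMS (\<lambda>j. - d i j) N M"
    and Seps_part: "Seps \<in> partitions N M"
    and Seps_bound: "\<forall>i\<in>{1..N}.
        val (\<lambda>j. if c i > 0 then - d i j / c i else 0) (Seps i)
        \<le> \<beta> * Min ((\<lambda>S. Max ((\<lambda>k. val (\<lambda>j. if c k > 0 then - d k j / c k else 0) (S k)) ` {1..N}))
                     ` partitions N M)"
  shows "solves_maxmin ((1 + eps) * lam) N M d Seps"
proof -
  let ?lstar = "Min ((\<lambda>S. Max ((\<lambda>k. val (\<lambda>j. if c k > 0 then - d k j / c k else 0) (S k))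
                 ` {1..N})) ` partitions N M)"
  obtain S where S: "solves_maxmin lam N M d S" using sol by blast
  have MmS_d: "MmS (d i) N M = - mMS (\<lambda>j. - d i j) N M" for i
    using MmS_eq_uminus_mMS[OF finM N1] .
  have "\<forall>k\<in>{1..N}. 0 < c k \<longrightarrow> val (\<lambda>j. - d k j) (S k) \<le> lam * c k"
  proof (intro ballI impI)
    fix k assume k: "k \<in> {1..N}"
    have "val (\<lambda>j. - d k j) (S k) \<le> lam * mMS (\<lambda>j. - d k j) N M"
      using S k unfolding solves_maxmin_def MmS_d val_uminus by force
    also have "\<dots> \<le> lam * c k"
      using c_bounds k lam by (intro mult_left_mono) auto
    finally show "val (\<lambda>j. - d k j) (S k) \<le> lam * c k" .
  qed
  then have lstar_le: "?lstar \<le> lam"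
    using normalized_minmax_le[OF finM N1 _ lam, of S c "\<lambda>k j. - d k j"] S
    unfolding solves_maxmin_def by blast
  show ?thesis
    unfolding solves_maxmin_def
  proof (intro conjI Seps_part ballI)
    fix i assume i: "i \<in> {1..N}"
    have "val (\<lambda>j. if 0 < c i then - d i j / c i else 0) (Seps i) \<le> \<beta> * ?lstar"
      using Seps_bound i by blast
    also have "\<dots> \<le> \<beta> * lam"
      using lstar_le beta by (intro mult_left_mono) auto
    finally have "val (\<lambda>j. - d i j) (Seps i) \<le> (1 + eps) * lam * mMS (\<lambda>j. - d i j) N M"
      using nonpos c_bounds i beta ab lam
      by (intro val_le_of_normalized_val_le[OF finM N1 _ partitions_subset[OF Seps_part i]]) auto
    then show "(1 + eps) * lam * MmS (d i) N M \<le> val (d i) (Seps i)"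
      by (simp add: MmS_d val_uminus)
  qed
qed

end
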